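(* Let $\mu\in\mathbb F_q\setminus\{0\}$. Any family of pairwise disjoint generators of $\mathcal Q_\mu$ that are totally isotropic with respect to $\perp_0$ has at most $q+1$ members.
   Context: Let $q$ be an even prime power and $n\ge 2$ an integer. Let $\mathrm{PG}(2n+1,q)$ have homogeneous coordinates $(X_1,\dots,X_{2n+2})$. Fix $\delta\in\mathbb F_q$ such that $X^2+X+\delta$ is irreducible over $\mathbb F_q$. For $\mu\in\mathbb F_q$ let $\mathcal Q_\mu$ be the elliptic quadric $X_1^2+X_1X_{2n+2}+\delta X_{2n+2}^2+\sum_{i=2}^{n+1}X_iX_{2n+3-i}+\mu(X_{2n}^2+X_{2n}X_{2n+1}+\delta X_{2n+1}^2)=0$, whose generators are $(n-1)$-spaces. Let $\perp_0$ be the symplectic polarity defined by the alternating form $B_0(X,Y)=\sum_{i=1}^{2n+2}X_iY_{2n+3-i}$. *)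

theory Defs
  imports Main "HOL-Library.Function_Algebras" "HOL-Computational_Algebra.Polynomial"
begin

text \<open>Vectors of F_q^(2n+2) are functions nat => 'a with coordinates X_1..X_(2n+2),
  i.e. support contained in {1..2n+2}.\<close>

definition scv :: "'a::field \<Rightarrow> (nat \<Rightarrow> 'a) \<Rightarrow> (nat \<Rightarrow> 'a)" where
  "scv c v = (\<lambda>i. c * v i)"

definition ambient :: "nat \<Rightarrow> (nat \<Rightarrow> 'a::field) set" where
  "ambient n = {v. \<forall>i. i \<notin> {1..2*n+2} \<longrightarrow> v i = 0}"

definition Qform :: "nat \<Rightarrow> 'a::field \<Rightarrow> 'a \<Rightarrow> (nat \<Rightarrow> 'a) \<Rightarrow> 'a" where
  "Qform n \<delta> \<mu> X =
     X 1 ^ 2 + X 1 * X (2*n+2) + \<delta> * X (2*n+2) ^ 2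
     + (\<Sum>i=2..n+1. X i * X (2*n+3-i))
     + \<mu> * (X (2*n) ^ 2 + X (2*n) * X (2*n+1) + \<delta> * X (2*n+1) ^ 2)"

definition B0 :: "nat \<Rightarrow> (nat \<Rightarrow> 'a::field) \<Rightarrow> (nat \<Rightarrow> 'a) \<Rightarrow> 'a" where
  "B0 n X Y = (\<Sum>i=1..2*n+2. X i * Y (2*n+3-i))"

text \<open>A projective (k-1)-space of PG(2n+1,q), as a k-dimensional vector subspace.\<close>
definition proj_subspace :: "nat \<Rightarrow> nat \<Rightarrow> (nat \<Rightarrow> 'a::field) set \<Rightarrow> bool" where
  "proj_subspace n k W \<longleftrightarrow> W \<subseteq> ambient n \<and> module.subspace scv W \<and> vector_space.dim scv W = k"

definition generator :: "nat \<Rightarrow> 'a::field \<Rightarrow> 'a \<Rightarrow> (nat \<Rightarrow> 'a) set \<Rightarrow> bool" where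
  "generator n \<delta> \<mu> W \<longleftrightarrow> proj_subspace n n W \<and> (\<forall>v\<in>W. Qform n \<delta> \<mu> v = 0)"

definition totally_isotropic_B0 :: "nat \<Rightarrow> (nat \<Rightarrow> 'a::field) set \<Rightarrow> bool" where
  "totally_isotropic_B0 n W \<longleftrightarrow> (\<forall>x\<in>W. \<forall>y\<in>W. B0 n x y = 0)"

end

theory Submission
  imports Defs "HOL-Library.Disjoint_Sets" "HOL-Library.Numeral_Type" "HOL-Library.FuncSet"
begin

text \<open>
  Since q is even, the polar form of Q_mu is B_0 + mu (X_2n Y_2n+1 + X_2n+1 Y_2n). On a generator W
  that is totally isotropic for perp_0 both polar forms vanish, so the projection of W to the
  coordinates (X_2n, X_2n+1) is totally isotropic for a nondegenerate alternating form on the plane.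
  Hence it has at most q elements and its kernel K has at least q^(n-1) vectors. On K the quadric
  degenerates to the elliptic form X_1^2 + X_1 X_2n+2 + delta X_2n+2^2 + sum_(i=4..n+1) X_i X_2n+3-i,
  whose radical is the line l = <e_2, e_3> and whose totally singular subgroups have at most q^(n-2)
  elements. So K cannot inject into the quotient by l: every such generator contains a point of l.
  Pairwise disjoint generators contain distinct points of l, and l has q + 1 points. Dimension
  bounds are replaced throughout by counting vectors.
\<close>

lemma even_card_fixpoint_free_involution:
  assumes "\<And>x. x \<in> X \<Longrightarrow> h x \<in> X" "\<And>x. x \<in> X \<Longrightarrow> h (h x) = x" "\<And>x. x \<in> X \<Longrightarrow> h x \<noteq> x"
  shows "even (card X)"
proof -
  \<comment> \<open>count modulo 2, in the two-element ring \<open>2\<close> of \<open>Numeral_Type\<close>\<close>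
  have "(\<Sum>x\<in>X. 1 :: 2) = 0"
    by (rule sum_involution_eq_0[where h = h]) (use assms in auto)
  then show ?thesis
    by (simp add: of_nat_eq_0_iff_char_dvd)
qed

lemma one_plus_one_eq_zero_if_even_card:
  assumes "even CARD('a::{finite,field})"
  shows "(1::'a) + 1 = 0"
proof (rule ccontr)
  assume two_nz: "(1::'a) + 1 \<noteq> 0"
  have "even (card (UNIV - {0::'a}))"
  proof (rule even_card_fixpoint_free_involution[where h = uminus])
    fix x :: 'a assume "x \<in> UNIV - {0}"
    moreover have "- x \<noteq> x" if "x \<noteq> 0"
      using two_nz that by (metis add_eq_0_iff2 distrib_right mult_1 mult_eq_0_iff)
    ultimately show "- x \<in> UNIV - {0}" "- (- x) = x" "- x \<noteq> x" by auto
  qed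
  moreover have "CARD('a) = Suc (card (UNIV - {0::'a}))"
    using card_Suc_Diff1[of UNIV "0::'a"] by (simp only: finite UNIV_I)
  ultimately show False using assms by (metis even_Suc)
qed

lemma irreducible_quadratic_form_anisotropic:
  fixes \<delta> a b :: "'a::field"
  assumes irr: "irreducible [:\<delta>, 1, 1:]" and zero: "a\<^sup>2 + a * b + \<delta> * b\<^sup>2 = 0"
  shows "a = 0 \<and> b = 0"
proof (rule ccontr)
  assume "\<not> (a = 0 \<and> b = 0)"
  with zero have "b \<noteq> 0" by auto
  then have "poly [:\<delta>, 1, 1:] (a / b) = (a\<^sup>2 + a * b + \<delta> * b\<^sup>2) / b\<^sup>2"
    by (simp add: field_simps power2_eq_square)
  with zero have "[:- (a / b), 1:] dvd [:\<delta>, 1, 1:]"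
    by (simp only: div_0 flip: poly_eq_0_iff_dvd)
  with irr have "[:\<delta>, 1, 1:] dvd [:- (a / b), 1:]"
    by (auto dest: irreducibleD' simp: is_unit_iff_degree)
  from dvd_imp_degree_le[OF this] show False
    by simp
qed

definition diff_closed :: "'a::minus set \<Rightarrow> bool" where
  "diff_closed T \<longleftrightarrow> (\<forall>x\<in>T. \<forall>y\<in>T. x - y \<in> T)"

lemma diff_closed_Collect:
  fixes T :: "'a::ab_group_add set"
  assumes "diff_closed T" and "\<And>x y. P x \<Longrightarrow> P y \<Longrightarrow> P (x - y)"
  shows "diff_closed {x\<in>T. P x}"
  using assms unfolding diff_closed_def by blast

lemma diff_closed_add:
  fixes T :: "'a::ab_group_add set"
  assumes "diff_closed T" and "x \<in> T" and "y \<in> T"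
  shows "x + y \<in> T"
proof -
  have "y - y \<in> T"
    using assms unfolding diff_closed_def by blast
  then have "0 - y \<in> T"
    using assms unfolding diff_closed_def by (metis diff_self)
  then have "x - (0 - y) \<in> T"
    using assms unfolding diff_closed_def by blast
  then show ?thesis
    by simp
qed

lemma card_le_card_image_mult_card_kernel:
  fixes T :: "'a::ab_group_add set" and f :: "'a \<Rightarrow> 'b::ab_group_add"
  assumes fin: "finite T" and T: "diff_closed T"
    and f: "\<And>x y. x \<in> T \<Longrightarrow> y \<in> T \<Longrightarrow> f (x - y) = f x - f y"
  shows "card T \<le> card (f ` T) * card {x\<in>T. f x = 0}"
proof -
  have "T = (\<Union>c\<in>f ` T. {x\<in>T. f x = c})" by blast
  then have "card T \<le> (\<Sum>c\<in>f ` T. card {x\<in>T. f x = c})"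
    by (metis card_UN_le fin finite_imageI)
  also have "\<dots> \<le> (\<Sum>c\<in>f ` T. card {x\<in>T. f x = 0})"
  proof (rule sum_mono)
    fix c assume "c \<in> f ` T"
    then obtain x0 where x0: "x0 \<in> T" "f x0 = c" by blast
    have "inj_on (\<lambda>x. x - x0) {x\<in>T. f x = c}"
      by (rule inj_onI) simp
    moreover have "(\<lambda>x. x - x0) ` {x\<in>T. f x = c} \<subseteq> {x\<in>T. f x = 0}"
    proof (rule image_subsetI)
      fix x assume "x \<in> {x\<in>T. f x = c}"
      then show "x - x0 \<in> {x\<in>T. f x = 0}"
        using T x0 f[of x x0] unfolding diff_closed_def by simp
    qed
    moreover have "finite {x\<in>T. f x = 0}"
      using fin by simp
    ultimately show "card {x\<in>T. f x = c} \<le> card {x\<in>T. f x = 0}"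
      by (rule card_inj_on_le)
  qed
  also have "\<dots> = card (f ` T) * card {x\<in>T. f x = 0}" by simp
  finally show ?thesis .
qed

lemma card_le_CARD_mult_card_coordinate_kernel:
  fixes T :: "('i \<Rightarrow> 'a::{finite,ab_group_add}) set"
  assumes "finite T" and "diff_closed T"
  shows "card T \<le> CARD('a) * card {x\<in>T. x k = 0}"
proof -
  have "card T \<le> card ((\<lambda>x. x k) ` T) * card {x\<in>T. x k = 0}"
    by (rule card_le_card_image_mult_card_kernel) (use assms in auto)
  also have "\<dots> \<le> CARD('a) * card {x\<in>T. x k = 0}"
    by (simp add: card_mono)
  finally show ?thesis .
qed

text \<open>For distinct indices (\<open>elliptic_indices\<close>) and anisotropic \<open>x\<^sup>2 + xy + \<delta>y\<^sup>2\<close> this is an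
  elliptic form: an anisotropic plane on the coordinates \<open>a, b\<close> plus the hyperbolic pairs
  \<open>(i, \<sigma> i)\<close>, \<open>i \<in> I\<close>.\<close>
definition elliptic_form :: "'a::comm_ring_1 \<Rightarrow> nat \<Rightarrow> nat \<Rightarrow> (nat \<Rightarrow> nat) \<Rightarrow> nat set \<Rightarrow> (nat \<Rightarrow> 'a) \<Rightarrow> 'a" where
  "elliptic_form \<delta> a b \<sigma> I x = x a ^ 2 + x a * x b + \<delta> * x b ^ 2 + (\<Sum>i\<in>I. x i * x (\<sigma> i))"

definition elliptic_indices :: "nat \<Rightarrow> nat \<Rightarrow> (nat \<Rightarrow> nat) \<Rightarrow> nat set \<Rightarrow> bool" where
  "elliptic_indices a b \<sigma> I \<longleftrightarrow>
     finite I \<and> inj_on \<sigma> I \<and> I \<inter> \<sigma> ` I = {} \<and> a \<noteq> b \<and> {a, b} \<inter> (I \<union> \<sigma> ` I) = {}"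

definition singular_subgroup :: "'a::comm_ring_1 \<Rightarrow> nat \<Rightarrow> nat \<Rightarrow> (nat \<Rightarrow> nat) \<Rightarrow> nat set \<Rightarrow> (nat \<Rightarrow> 'a) set \<Rightarrow> bool" where
  "singular_subgroup \<delta> a b \<sigma> I T \<longleftrightarrow> finite T \<and> diff_closed T
     \<and> (\<forall>x\<in>T. \<forall>j. j \<notin> insert a (insert b (I \<union> \<sigma> ` I)) \<longrightarrow> x j = 0)
     \<and> (\<forall>x\<in>T. elliptic_form \<delta> a b \<sigma> I x = 0)"

lemma elliptic_indices_insertD:
  assumes "elliptic_indices a b \<sigma> (insert k I)" and "k \<notin> I"
  shows "elliptic_indices a b \<sigma> I"
    and "\<sigma> k \<notin> insert a (insert b (insert k (I \<union> \<sigma> ` I)))"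
  using assms unfolding elliptic_indices_def by (auto simp: inj_on_image_mem_iff)

lemma elliptic_form_insert:
  "finite I \<Longrightarrow> k \<notin> I \<Longrightarrow>
    elliptic_form \<delta> a b \<sigma> (insert k I) x = elliptic_form \<delta> a b \<sigma> I x + x k * x (\<sigma> k)"
  by (simp add: elliptic_form_def ac_simps)

lemma elliptic_form_cong:
  assumes "\<And>j. j \<in> insert a (insert b (I \<union> \<sigma> ` I)) \<Longrightarrow> x j = y j"
  shows "elliptic_form \<delta> a b \<sigma> I x = elliptic_form \<delta> a b \<sigma> I y"
proof -
  have "(\<Sum>i\<in>I. x i * x (\<sigma> i)) = (\<Sum>i\<in>I. y i * y (\<sigma> i))"
    by (rule sum.cong) (use assms in auto)
  then show ?thesis
    unfolding elliptic_form_def using assms by simp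
qed

lemma inj_on_forget_coordinate:
  fixes T :: "('i \<Rightarrow> 'a::idom) set" and Q :: "('i \<Rightarrow> 'a) \<Rightarrow> 'a"
  assumes T: "diff_closed T" and xs: "xs \<in> T" "xs k \<noteq> 0" and "k \<noteq> l"
    and Q: "\<And>x y. (\<And>j. j \<noteq> l \<Longrightarrow> x j = y j) \<Longrightarrow> Q x = Q y"
    and sing: "\<And>x. x \<in> T \<Longrightarrow> Q x + x k * x l = 0"
  shows "inj_on (\<lambda>x. x(l := 0)) T"
proof (rule inj_onI)
  fix x y assume x: "x \<in> T" and y: "y \<in> T" and eq: "x(l := 0) = y(l := 0)"
  define d where "d = x - y"
  have d_other: "d j = 0" if "j \<noteq> l" for j
    using fun_cong[OF eq, of j] that by (simp add: d_def)
  have "d \<in> T"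
    using T x y unfolding diff_closed_def d_def by blast
  with T xs(1) have "xs + d \<in> T"
    by (rule diff_closed_add)
  have "Q (xs + d) = Q xs"
    by (rule Q) (simp add: d_other)
  then have "Q (xs + d) + (xs k + d k) * (xs l + d l) = (Q xs + xs k * xs l) + xs k * d l"
    using d_other[OF \<open>k \<noteq> l\<close>] by (simp add: algebra_simps)
  then have "xs k * d l = 0"
    using sing[OF xs(1)] sing[OF \<open>xs + d \<in> T\<close>] by simp
  then have "d = 0"
    using xs(2) d_other by (metis mult_eq_0_iff zero_fun_apply ext)
  then show "x = y"
    by (simp add: d_def)
qed

lemma card_singular_subgroup_empty:
  assumes aniso: "\<And>u v. u\<^sup>2 + u * v + \<delta> * v\<^sup>2 = 0 \<Longrightarrow> u = 0 \<and> v = 0"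
    and T: "singular_subgroup \<delta> a b \<sigma> {} T"
  shows "card T \<le> 1"
proof -
  have "x = 0" if x: "x \<in> T" for x
  proof
    fix j
    have "x a = 0 \<and> x b = 0"
      using aniso[of "x a" "x b"] T x by (simp add: singular_subgroup_def elliptic_form_def)
    then show "x j = 0 j"
      using T x unfolding singular_subgroup_def by auto
  qed
  then have "T \<subseteq> {0}"
    by blast
  then show ?thesis
    using card_mono[of "{0}" T] by simp
qed

lemma singular_subgroup_partner_kernel:
  assumes T: "singular_subgroup \<delta> a b \<sigma> (insert k I) T" and "finite I" "k \<notin> I"
    and vanish: "\<forall>x\<in>T. x k = 0"
  shows "singular_subgroup \<delta> a b \<sigma> I {x\<in>T. x (\<sigma> k) = 0}"
  unfolding singular_subgroup_def
proof (intro conjI ballI allI impI)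
  show "finite {x\<in>T. x (\<sigma> k) = 0}" and "diff_closed {x\<in>T. x (\<sigma> k) = 0}"
    using T unfolding singular_subgroup_def by (auto intro: diff_closed_Collect)
  show "x j = 0" if "x \<in> {x\<in>T. x (\<sigma> k) = 0}" and "j \<notin> insert a (insert b (I \<union> \<sigma> ` I))" for x j
    using that vanish T unfolding singular_subgroup_def by auto
  show "elliptic_form \<delta> a b \<sigma> I x = 0" if "x \<in> {x\<in>T. x (\<sigma> k) = 0}" for x
    using that vanish T elliptic_form_insert[OF \<open>finite I\<close> \<open>k \<notin> I\<close>, of \<delta> a b \<sigma> x]
    unfolding singular_subgroup_def by simp
qed

lemma singular_subgroup_forget_partner:
  assumes T: "singular_subgroup \<delta> a b \<sigma> (insert k I) T" and "finite I" "k \<notin> I"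
    and partner: "\<sigma> k \<notin> insert a (insert b (insert k (I \<union> \<sigma> ` I)))"
  shows "singular_subgroup \<delta> a b \<sigma> I ((\<lambda>x. x(\<sigma> k := 0)) ` {x\<in>T. x k = 0})"
  unfolding singular_subgroup_def
proof (intro conjI ballI allI impI)
  let ?forget = "\<lambda>x::nat \<Rightarrow> 'a. x(\<sigma> k := 0)"
  show "finite (?forget ` {x\<in>T. x k = 0})"
    using T unfolding singular_subgroup_def by simp
  have "diff_closed {x\<in>T. x k = 0}"
    using T unfolding singular_subgroup_def by (auto intro: diff_closed_Collect)
  moreover have "?forget x - ?forget y = ?forget (x - y)" for x y
    by (simp add: fun_eq_iff)
  ultimately show "diff_closed (?forget ` {x\<in>T. x k = 0})"
    unfolding diff_closed_def by auto
  show "x j = 0" if "x \<in> ?forget ` {x\<in>T. x k = 0}" and "j \<notin> insert a (insert b (I \<union> \<sigma> ` I))" for x j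
    using that partner T unfolding singular_subgroup_def by (cases "j = k") auto
  have "elliptic_form \<delta> a b \<sigma> I (?forget y) = elliptic_form \<delta> a b \<sigma> (insert k I) y" if "y k = 0" for y
  proof -
    have "elliptic_form \<delta> a b \<sigma> I (?forget y) = elliptic_form \<delta> a b \<sigma> I y"
      by (rule elliptic_form_cong) (use partner in auto)
    then show ?thesis
      using that elliptic_form_insert[OF \<open>finite I\<close> \<open>k \<notin> I\<close>, of \<delta> a b \<sigma> y] by simp
  qed
  then show "elliptic_form \<delta> a b \<sigma> I x = 0" if "x \<in> ?forget ` {x\<in>T. x k = 0}" for x
    using that T unfolding singular_subgroup_def by auto
qed

lemma singular_subgroup_insert_reduce:
  fixes T :: "(nat \<Rightarrow> 'a::{finite,field}) set"
  assumes idx: "elliptic_indices a b \<sigma> (insert k I)" and "k \<notin> I"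
    and T: "singular_subgroup \<delta> a b \<sigma> (insert k I) T"
  obtains T' where "singular_subgroup \<delta> a b \<sigma> I T'" and "card T \<le> CARD('a) * card T'"
proof -
  have "finite I"
    using idx by (simp add: elliptic_indices_def)
  note partner = elliptic_indices_insertD(2)[OF idx \<open>k \<notin> I\<close>]
  have fin: "finite T" and sub: "diff_closed T"
    using T by (simp_all add: singular_subgroup_def)
  show ?thesis
  proof (cases "\<forall>x\<in>T. x k = 0")
    case True
    show ?thesis
      using singular_subgroup_partner_kernel[OF T \<open>finite I\<close> \<open>k \<notin> I\<close> True]
        card_le_CARD_mult_card_coordinate_kernel[OF fin sub] by (rule that)
  next
    case False
    then obtain xs where xs: "xs \<in> T" "xs k \<noteq> 0"
      by blast
    \<comment> \<open>a vector with \<open>x\<^sub>k \<noteq> 0\<close> makes the coordinate \<open>x\<^bsub>\<sigma> k\<^esub>\<close> redundant on \<open>T\<close>\<close>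
    have "inj_on (\<lambda>x. x(\<sigma> k := 0)) T"
    proof (rule inj_on_forget_coordinate[OF sub xs, where Q = "elliptic_form \<delta> a b \<sigma> I"])
      show "k \<noteq> \<sigma> k"
        using partner by auto
      show "elliptic_form \<delta> a b \<sigma> I x = elliptic_form \<delta> a b \<sigma> I y"
        if "\<And>j. j \<noteq> \<sigma> k \<Longrightarrow> x j = y j" for x y
        by (rule elliptic_form_cong, rule that) (use partner in auto)
      show "elliptic_form \<delta> a b \<sigma> I x + x k * x (\<sigma> k) = 0" if "x \<in> T" for x
        using that T elliptic_form_insert[OF \<open>finite I\<close> \<open>k \<notin> I\<close>, of \<delta> a b \<sigma> x]
        unfolding singular_subgroup_def by simp
    qed
    then have "card {x\<in>T. x k = 0} = card ((\<lambda>x. x(\<sigma> k := 0)) ` {x\<in>T. x k = 0})"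
      by (simp add: card_image inj_on_subset)
    then show ?thesis
      using singular_subgroup_forget_partner[OF T \<open>finite I\<close> \<open>k \<notin> I\<close> partner]
        card_le_CARD_mult_card_coordinate_kernel[OF fin sub, of k] by (intro that) simp_all
  qed
qed

lemma card_singular_subgroup_le:
  fixes T :: "(nat \<Rightarrow> 'a::{finite,field}) set"
  assumes aniso: "\<And>u v. u\<^sup>2 + u * v + \<delta> * v\<^sup>2 = 0 \<Longrightarrow> u = 0 \<and> v = 0"
    and idx: "elliptic_indices a b \<sigma> I" and T: "singular_subgroup \<delta> a b \<sigma> I T"
  shows "card T \<le> CARD('a) ^ card I"
proof -
  have "finite I"
    using idx by (simp add: elliptic_indices_def)
  then show ?thesis
    using idx T
  proof (induction I arbitrary: T rule: finite_induct)
    case empty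
    then show ?case
      using card_singular_subgroup_empty[OF aniso] by simp
  next
    case (insert k I)
    obtain T' where T': "singular_subgroup \<delta> a b \<sigma> I T'" and card: "card T \<le> CARD('a) * card T'"
      using singular_subgroup_insert_reduce[OF insert.prems(1) insert.hyps(2) insert.prems(2)] .
    have "card T' \<le> CARD('a) ^ card I"
      using elliptic_indices_insertD(1)[OF insert.prems(1) insert.hyps(2)] T' by (rule insert.IH)
    then show ?case
      using card insert.hyps by (simp add: order_trans)
  qed
qed

lemma vector_space_scv: "vector_space (scv :: 'a::field \<Rightarrow> (nat \<Rightarrow> 'a) \<Rightarrow> (nat \<Rightarrow> 'a))"
  unfolding vector_space_def scv_def by (simp add: fun_eq_iff distrib_left distrib_right)

lemma module_scv: "module (scv :: 'a::field \<Rightarrow> (nat \<Rightarrow> 'a) \<Rightarrow> (nat \<Rightarrow> 'a))"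
  using vector_space_scv by (simp add: module_iff_vector_space)

lemma diff_closed_subspace: "module.subspace scv W \<Longrightarrow> diff_closed W"
  unfolding diff_closed_def using module.subspace_diff[OF module_scv] by blast

lemma finite_ambient: "finite (ambient n :: (nat \<Rightarrow> 'a::{finite,field}) set)"
proof (rule finite_subset)
  show "ambient n \<subseteq> {f. \<forall>i. i \<notin> {1..2*n+2} \<longrightarrow> f i = 0}"
    unfolding ambient_def by blast
  show "finite {f :: nat \<Rightarrow> 'a. \<forall>i. i \<notin> {1..2*n+2} \<longrightarrow> f i = 0}"
    using finite_set_of_finite_funs[of "{1..2*n+2}" "UNIV :: 'a set" 0] by simp
qed

lemma CARD_pow_dim_le_card_subspace:
  fixes W :: "(nat \<Rightarrow> 'a::{finite,field}) set"
  assumes W: "module.subspace scv W" and fin: "finite W"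
  shows "CARD('a) ^ vector_space.dim scv W \<le> card W"
proof -
  obtain B where B: "B \<subseteq> W" "\<not> module.dependent scv B" "card B = vector_space.dim scv W"
    using vector_space.basis_exists[OF vector_space_scv, of W] by metis
  have finB: "finite B"
    using B(1) fin by (rule finite_subset)
  define comb where "comb c = (\<Sum>b\<in>B. scv (c b) b)" for c :: "(nat \<Rightarrow> 'a) \<Rightarrow> 'a"
  let ?C = "B \<rightarrow>\<^sub>E (UNIV :: 'a set)"
  have "inj_on comb ?C"
  proof (rule inj_onI)
    fix c c' assume c: "c \<in> ?C" and c': "c' \<in> ?C" and eq: "comb c = comb c'"
    have "(\<Sum>b\<in>B. scv (c b - c' b) b) = (\<Sum>b\<in>B. scv (c b) b - scv (c' b) b)"
      by (rule sum.cong) (simp_all add: scv_def fun_eq_iff left_diff_distrib)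
    also have "\<dots> = comb c - comb c'"
      unfolding comb_def by (rule sum_subtractf)
    finally have sum0: "(\<Sum>b\<in>B. scv (c b - c' b) b) = 0"
      using eq by simp
    have "\<forall>b\<in>B. c b - c' b = 0"
    proof (rule ccontr)
      assume "\<not> (\<forall>b\<in>B. c b - c' b = 0)"
      with sum0 have "module.dependent scv B"
        unfolding module.dependent_finite[OF module_scv finB] by (intro exI[of _ "\<lambda>b. c b - c' b"]) auto
      with B(2) show False ..
    qed
    then show "c = c'"
      using c c' by (auto intro: PiE_ext)
  qed
  moreover have "comb ` ?C \<subseteq> W"
    unfolding comb_def using B(1) module.subspace_scale[OF module_scv W]
    by (auto intro!: module.subspace_sum[OF module_scv W])
  ultimately have "card ?C \<le> card W"
    using fin by (rule card_inj_on_le)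
  then show ?thesis
    using finB B(3) by (simp add: card_PiE)
qed

lemma B0_eq_sum_pairs:
  fixes x y :: "nat \<Rightarrow> 'a::field"
  shows "B0 n x y = (\<Sum>i=1..n+1. x i * y (2*n+3-i) + x (2*n+3-i) * y i)"
proof -
  have split: "{1..2*n+2} = {1..n+1} \<union> {n+2..2*n+2}"
    by auto
  have "B0 n x y = (\<Sum>i=1..n+1. x i * y (2*n+3-i)) + (\<Sum>i=n+2..2*n+2. x i * y (2*n+3-i))"
    unfolding B0_def split by (rule sum.union_disjoint) auto
  also have "(\<Sum>i=n+2..2*n+2. x i * y (2*n+3-i)) = (\<Sum>i=1..n+1. x (2*n+3-i) * y i)"
    by (rule sum.reindex_bij_witness[where i="\<lambda>i. 2*n+3-i" and j="\<lambda>i. 2*n+3-i"]) auto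
  finally show ?thesis
    by (simp add: sum.distrib)
qed

lemma Qform_add:
  fixes x y :: "nat \<Rightarrow> 'a::field"
  assumes two: "(1::'a) + 1 = 0"
  shows "Qform n \<delta> \<mu> (x + y) = Qform n \<delta> \<mu> x + Qform n \<delta> \<mu> y + B0 n x y
           + \<mu> * (x (2*n) * y (2*n+1) + x (2*n+1) * y (2*n))"
proof -
  have double: "c + c = 0" for c :: 'a
  proof -
    have "c + c = (1 + 1) * c"
      by (simp only: distrib_right mult_1)
    then show ?thesis
      by (simp only: two mult_zero_left)
  qed
  have square: "(c + d)\<^sup>2 = c\<^sup>2 + d\<^sup>2" for c d :: 'a
  proof -
    have "(c + d)\<^sup>2 = c\<^sup>2 + d\<^sup>2 + (c * d + c * d)"
      by (simp add: power2_eq_square algebra_simps)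
    then show ?thesis
      by (simp only: double add_0_right)
  qed
  define Sx where "Sx = (\<Sum>i=2..n+1. x i * x (2*n+3-i))"
  define Sy where "Sy = (\<Sum>i=2..n+1. y i * y (2*n+3-i))"
  define C where "C = (\<Sum>i=2..n+1. x i * y (2*n+3-i) + x (2*n+3-i) * y i)"
  have "(\<Sum>i=2..n+1. (x + y) i * (x + y) (2*n+3-i)) = Sx + Sy + C"
    unfolding Sx_def Sy_def C_def sum.distrib[symmetric] by (rule sum.cong) (simp_all add: algebra_simps)
  moreover have "B0 n x y = x 1 * y (2*n+2) + x (2*n+2) * y 1 + C"
  proof -
    have "{1..n+1} = insert 1 {2..n+1}"
      by auto
    then show ?thesis
      unfolding B0_eq_sum_pairs C_def by simp
  qed
  ultimately show ?thesis
    unfolding Qform_def Sx_def[symmetric] Sy_def[symmetric] plus_fun_apply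
    by (simp add: square algebra_simps)
qed

lemma card_le_CARD_mult_card_pair_kernel:
  fixes T :: "('i \<Rightarrow> 'a::{finite,field}) set"
  assumes fin: "finite T" and T: "diff_closed T"
    and alt: "\<And>x y. x \<in> T \<Longrightarrow> y \<in> T \<Longrightarrow> x k * y l + x l * y k = 0"
  shows "card T \<le> CARD('a) * card {x\<in>T. x k = 0 \<and> x l = 0}"
proof (cases "\<forall>x\<in>T. x k = 0")
  case True
  then have "{x\<in>T. x l = 0} = {x\<in>T. x k = 0 \<and> x l = 0}"
    by auto
  then show ?thesis
    using card_le_CARD_mult_card_coordinate_kernel[OF fin T, of l] by simp
next
  case False
  then obtain xs where xs: "xs \<in> T" "xs k \<noteq> 0"
    by blast
  have "x l = 0" if "x \<in> T" and "x k = 0" for x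
    using alt[OF that(1) xs(1)] that(2) xs(2) by simp
  then have "{x\<in>T. x k = 0} = {x\<in>T. x k = 0 \<and> x l = 0}"
    by auto
  then show ?thesis
    using card_le_CARD_mult_card_coordinate_kernel[OF fin T, of k] by simp
qed

lemma generator_pair_form_eq_0:
  fixes W :: "(nat \<Rightarrow> 'a::field) set"
  assumes two: "(1::'a) + 1 = 0" and "\<mu> \<noteq> 0"
    and gen: "generator n \<delta> \<mu> W" and iso: "totally_isotropic_B0 n W"
    and x: "x \<in> W" and y: "y \<in> W"
  shows "x (2*n) * y (2*n+1) + x (2*n+1) * y (2*n) = 0"
proof -
  have "module.subspace scv W" and sing: "\<And>v. v \<in> W \<Longrightarrow> Qform n \<delta> \<mu> v = 0"
    using gen unfolding generator_def proj_subspace_def by auto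
  then have "x + y \<in> W"
    using x y module.subspace_add[OF module_scv] by blast
  moreover have "B0 n x y = 0"
    using iso x y unfolding totally_isotropic_B0_def by blast
  ultimately have "\<mu> * (x (2*n) * y (2*n+1) + x (2*n+1) * y (2*n)) = 0"
    using Qform_add[OF two, of n \<delta> \<mu> x y] sing x y by simp
  then show ?thesis
    using \<open>\<mu> \<noteq> 0\<close> by simp
qed

lemma Qform_elliptic_indices: "elliptic_indices 1 (2*n+2) (\<lambda>i. 2*n+3-i) {4..n+1}"
  unfolding elliptic_indices_def inj_on_def by auto

lemma Qform_eq_elliptic_form:
  fixes x :: "nat \<Rightarrow> 'a::field"
  assumes n: "n \<ge> 2" and x: "x (2*n) = 0" "x (2*n+1) = 0"
  shows "Qform n \<delta> \<mu> x = elliptic_form \<delta> 1 (2*n+2) (\<lambda>i. 2*n+3-i) {4..n+1} (x(2 := 0, 3 := 0))"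
proof -
  have "{2..n+1} = insert 2 (insert 3 {4..n+1})"
    using n by auto
  then have "(\<Sum>i=2..n+1. x i * x (2*n+3-i)) = (\<Sum>i=4..n+1. x i * x (2*n+3-i))"
    using x by (simp add: numeral_3_eq_3)
  also have "\<dots> = (\<Sum>i=4..n+1. (x(2 := 0, 3 := 0)) i * (x(2 := 0, 3 := 0)) (2*n+3-i))"
    by (rule sum.cong) auto
  finally show ?thesis
    unfolding Qform_def elliptic_form_def using n x by simp
qed

lemma Qform_elliptic_support:
  fixes x :: "nat \<Rightarrow> 'a::field"
  assumes x: "x \<in> ambient n" "x (2*n) = 0" "x (2*n+1) = 0"
    and j: "j \<notin> insert 1 (insert (2*n+2) ({4..n+1} \<union> (\<lambda>i. 2*n+3-i) ` {4..n+1}))"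
  shows "(x(2 := 0, 3 := 0)) j = 0"
proof -
  have "j \<notin> {n+2..2*n-1}"
  proof
    assume "j \<in> {n+2..2*n-1}"
    then have "j = 2*n+3-(2*n+3-j)" and "2*n+3-j \<in> {4..n+1}"
      by auto
    then show False
      using j by blast
  qed
  then consider "j \<notin> {1..2*n+2}" | "j = 2" | "j = 3" | "j = 2*n" | "j = 2*n+1"
    using j by fastforce
  then show ?thesis
    by cases (use x in \<open>auto simp: ambient_def\<close>)
qed

lemma generator_meets_line:
  fixes W :: "(nat \<Rightarrow> 'a::{finite,field}) set"
  assumes two: "(1::'a) + 1 = 0" and n: "n \<ge> 2"
    and aniso: "\<And>u v. u\<^sup>2 + u * v + \<delta> * v\<^sup>2 = 0 \<Longrightarrow> u = 0 \<and> v = 0"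
    and mu: "\<mu> \<noteq> 0" and gen: "generator n \<delta> \<mu> W" and iso: "totally_isotropic_B0 n W"
  shows "\<exists>v\<in>W. v \<noteq> 0 \<and> (\<forall>j. j \<noteq> 2 \<and> j \<noteq> 3 \<longrightarrow> v j = 0)"
proof (rule ccontr)
  assume no_line: "\<not> ?thesis"
  have amb: "W \<subseteq> ambient n" and sub: "module.subspace scv W" and dim: "vector_space.dim scv W = n"
    and sing: "\<And>v. v \<in> W \<Longrightarrow> Qform n \<delta> \<mu> v = 0"
    using gen unfolding generator_def proj_subspace_def by auto
  have fin: "finite W"
    using amb finite_ambient by (rule finite_subset)
  have W: "diff_closed W"
    using sub by (rule diff_closed_subspace)
  define K where "K = {x\<in>W. x (2*n) = 0 \<and> x (2*n+1) = 0}"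
  define strip where "strip x = x(2 := 0, 3 := 0)" for x :: "nat \<Rightarrow> 'a"
  have K: "diff_closed K"
    unfolding K_def using W by (rule diff_closed_Collect) simp
  have strip_diff: "strip x - strip y = strip (x - y)" for x y
    by (simp add: strip_def fun_eq_iff)
  have "CARD('a) ^ n \<le> card W"
    using CARD_pow_dim_le_card_subspace[OF sub fin] dim by simp
  also have "card W \<le> CARD('a) * card K"
    unfolding K_def using fin W
    by (rule card_le_CARD_mult_card_pair_kernel) (rule generator_pair_form_eq_0[OF two mu gen iso])
  also have "card K = card (strip ` K)"
  proof -
    have "inj_on strip K"
    proof (rule inj_onI)
      fix x y assume "x \<in> K" "y \<in> K" "strip x = strip y"
      then have "x - y \<in> W" and "strip (x - y) = 0"
        using W strip_diff[of x y] unfolding K_def diff_closed_def by auto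
      then have "x - y = 0"
        using no_line by (metis fun_upd_other strip_def zero_fun_apply)
      then show "x = y"
        by simp
    qed
    then show ?thesis
      by (simp add: card_image)
  qed
  also have "card (strip ` K) \<le> CARD('a) ^ card {4..n+1}"
  proof (rule card_singular_subgroup_le[OF aniso Qform_elliptic_indices])
    have "diff_closed (strip ` K)"
      using K unfolding diff_closed_def by (auto simp: strip_diff)
    moreover have "(strip x) j = 0"
      if "x \<in> K" and "j \<notin> insert 1 (insert (2*n+2) ({4..n+1} \<union> (\<lambda>i. 2*n+3-i) ` {4..n+1}))" for x j
      using that amb Qform_elliptic_support unfolding K_def strip_def by blast
    moreover have "elliptic_form \<delta> 1 (2*n+2) (\<lambda>i. 2*n+3-i) {4..n+1} (strip x) = 0" if "x \<in> K" for x
      using that sing[of x] Qform_eq_elliptic_form[OF n, of x \<delta> \<mu>] unfolding K_def strip_def by simp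
    ultimately show "singular_subgroup \<delta> 1 (2*n+2) (\<lambda>i. 2*n+3-i) {4..n+1} (strip ` K)"
      unfolding singular_subgroup_def using fin K_def by auto
  qed
  finally have "CARD('a) ^ n \<le> CARD('a) * CARD('a) ^ (n - 2)"
    by simp
  moreover have "CARD('a) * CARD('a) ^ (n - 2) < CARD('a) ^ n"
  proof -
    obtain m where m: "n = m + 2"
      using n by (metis le_add_diff_inverse2)
    have "CARD('a) * CARD('a) ^ m < 2 * (CARD('a) * CARD('a) ^ m)"
      using finite_UNIV_card_ge_0[where ?'a = 'a] by simp
    also have "\<dots> \<le> CARD('a) * (CARD('a) * CARD('a) ^ m)"
      using card_mono[of UNIV "{0::'a, 1}"] by (intro mult_right_mono) simp_all
    finally show ?thesis
      using m by (simp add: power_add power2_eq_square mult.assoc)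
  qed
  ultimately show False
    by simp
qed

lemma card_family_meeting_line_le:
  fixes F :: "(nat \<Rightarrow> 'a::{finite,field}) set set"
  assumes "k \<noteq> l"
    and scale: "\<And>W c v. W \<in> F \<Longrightarrow> v \<in> W \<Longrightarrow> scv c v \<in> W"
    and meets: "\<And>W. W \<in> F \<Longrightarrow> \<exists>v\<in>W. v \<noteq> 0 \<and> (\<forall>j. j \<noteq> k \<and> j \<noteq> l \<longrightarrow> v j = 0)"
    and disj: "\<And>W W'. W \<in> F \<Longrightarrow> W' \<in> F \<Longrightarrow> W \<noteq> W' \<Longrightarrow> W \<inter> W' = {0}"
  shows "finite F \<and> card F \<le> CARD('a) + 1"
proof -
  define point where "point t = (\<lambda>i. if i = k then 1 else if i = l then t else 0)" for t :: 'a
  define P where "P = insert (\<lambda>i. if i = l then 1 else 0) (range point)"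
  have "\<exists>p\<in>P. p \<in> W" if W: "W \<in> F" for W
  proof -
    obtain v where v: "v \<in> W" "v \<noteq> 0" "\<And>j. j \<noteq> k \<Longrightarrow> j \<noteq> l \<Longrightarrow> v j = 0"
      using meets[OF W] by blast
    show ?thesis
    proof (cases "v k = 0")
      case False
      then have "scv (inverse (v k)) v = point (v l / v k)"
        using v(3) \<open>k \<noteq> l\<close> by (auto simp: scv_def point_def fun_eq_iff field_simps)
      then show ?thesis
        using scale[OF W v(1)] unfolding P_def by (metis insertCI rangeI)
    next
      case True
      then have "v l \<noteq> 0"
        using v(2,3) by (metis zero_fun_apply ext)
      moreover have "v j = 0" if "j \<noteq> l" for j
        using True v(3) that by (cases "j = k") auto
      ultimately have "scv (inverse (v l)) v = (\<lambda>i. if i = l then 1 else 0)"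
        by (auto simp: scv_def fun_eq_iff)
      then show ?thesis
        using scale[OF W v(1)] unfolding P_def by (metis insertI1)
    qed
  qed
  then obtain g where g: "\<And>W. W \<in> F \<Longrightarrow> g W \<in> P \<and> g W \<in> W"
    by metis
  have P_nonzero: "p \<noteq> 0" if "p \<in> P" for p
    using that \<open>k \<noteq> l\<close> unfolding P_def point_def by (auto simp: fun_eq_iff)
  have inj: "inj_on g F"
  proof (rule inj_onI)
    fix W W' assume "W \<in> F" "W' \<in> F" "g W = g W'"
    then show "W = W'"
      using g disj P_nonzero by (metis Int_iff singletonD)
  qed
  have sub: "g ` F \<subseteq> P"
    using g by auto
  have "finite P"
    unfolding P_def by simp
  have "card F \<le> card P"
    using inj sub \<open>finite P\<close> by (rule card_inj_on_le)
  also have "\<dots> \<le> card (range point) + 1"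
    unfolding P_def by (simp add: card_insert_if)
  also have "card (range point) \<le> CARD('a)"
    by (rule card_image_le) simp
  finally show ?thesis
    using inj_on_finite[OF inj sub \<open>finite P\<close>] by simp
qed

theorem mainTheorem10:
  fixes n :: nat and \<delta> \<mu> :: "'a::{finite,field}"
    and F :: "(nat \<Rightarrow> 'a) set set"
  assumes q_even: "even (card (UNIV :: 'a set))"
    and n_ge: "n \<ge> 2"
    and delta_irred: "irreducible [:\<delta>, 1, 1:]"
    and mu_nz: "\<mu> \<noteq> 0"
    and gens: "\<forall>W\<in>F. generator n \<delta> \<mu> W \<and> totally_isotropic_B0 n W"
    and disj: "\<forall>W1\<in>F. \<forall>W2\<in>F. W1 \<noteq> W2 \<longrightarrow> W1 \<inter> W2 = {0}"
  shows "finite F \<and> card F \<le> card (UNIV :: 'a set) + 1"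
proof (rule card_family_meeting_line_le)
  show "(2::nat) \<noteq> 3"
    by simp
  show "scv c v \<in> W" if "W \<in> F" and "v \<in> W" for W c v
    using gens that module.subspace_scale[OF module_scv]
    unfolding generator_def proj_subspace_def by blast
  show "\<exists>v\<in>W. v \<noteq> 0 \<and> (\<forall>j. j \<noteq> 2 \<and> j \<noteq> 3 \<longrightarrow> v j = 0)" if "W \<in> F" for W
    using gens that
    by (intro generator_meets_line[OF one_plus_one_eq_zero_if_even_card[OF q_even] n_ge _ mu_nz])
      (auto dest: irreducible_quadratic_form_anisotropic[OF delta_irred])
qed (use disj in blast)

end
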